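(* Let $0<\alpha<1$, $\sigma>0$, $N_1$ a positive integer, $h=\sigma^2\alpha^2$, $T=\sigma\alpha\sqrt{N_1}$, $\kappa=\frac\alpha{1-\alpha}$, and let $n\ge1$ be an integer. For $x\in(0,1]$ and complex $u\notin(-\infty,0]$ let $$f(u,x)=\frac{\sin(\alpha\pi)}{\alpha\pi}\frac{1}{2\sqrt u}\frac{xe^{\sqrt u-T}}{e^{\frac1\alpha(\sqrt u-T)}+x}$$ (principal branch of $\sqrt u$). Let $u^*=\frac{1+(1-2\alpha)\sqrt{4\alpha-4\alpha^2+1}}{2(1-\alpha)^2}$, $\gamma=\alpha\log\!\Big(\frac{\frac1\kappa\sqrt{u^*}+1}{\sqrt{u^*}-1}\Big)+\sqrt{u^*}$, $x^*=e^{\frac1\alpha(\gamma-T)}$, $M_0=2\max\left\{\frac{\sigma^2}{4},1+\mathrm{ceil}\!\left(\frac{9\pi^2}{\sigma^2}\right),2\,\mathrm{ceil}\!\left[\left(1+\sqrt{\pi/\sigma}\right)^4\right]\right\}$, and $\Upsilon=\{x\in[x^*,1]:(T+\alpha\log x)^2-\alpha^2\pi^2>M_0h\}$. For $x\in\Upsilon$ put $a=2\alpha\pi(T+\alpha\log x)$. Then $$\left|\int_0^{2a}\big[f(h+it,x)-f(h-it,x)\big]e^{-\frac{2n\pi}{h}t}\,\mathrm{d}t\right|=\left(\frac{e^h}{h^2}\int_0^1te^{-\frac{2n\pi}{h}t}\,\mathrm{d}t+\frac{e^{\sqrt h}}{\sqrt h}\int_1^{+\infty}\frac{e^{\sqrt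 t}}{\sqrt t}e^{-\frac{2n\pi}{h}t}\,\mathrm{d}t\right)\mathcal{O}(e^{-T})$$ uniformly for $x\in\Upsilon$, with the constant in the $\mathcal{O}$ term independent of $T$, $n$, $x$, $h$, $\alpha$ and $\sigma$.
   Context: $\mathrm{ceil}(y)$ is the least integer $\ge y$. *)

theory Defs
  imports "HOL-Analysis.Analysis"
begin

definition hA :: "real \<Rightarrow> real \<Rightarrow> real" where
  "hA \<alpha> \<sigma> = \<sigma>\<^sup>2 * \<alpha>\<^sup>2"

definition TA :: "real \<Rightarrow> real \<Rightarrow> nat \<Rightarrow> real" where
  "TA \<alpha> \<sigma> N1 = \<sigma> * \<alpha> * sqrt (real N1)"

definition kappaA :: "real \<Rightarrow> real" where
  "kappaA \<alpha> = \<alpha> / (1 - \<alpha>)"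

definition fA :: "real \<Rightarrow> real \<Rightarrow> complex \<Rightarrow> real \<Rightarrow> complex" where
  "fA \<alpha> T u x =
     complex_of_real (sin (\<alpha> * pi) / (\<alpha> * pi)) * (1 / (2 * csqrt u)) *
     (complex_of_real x * exp (csqrt u - complex_of_real T)) /
     (exp ((csqrt u - complex_of_real T) / complex_of_real \<alpha>) + complex_of_real x)"

definition ustarA :: "real \<Rightarrow> real" where
  "ustarA \<alpha> = (1 + (1 - 2*\<alpha>) * sqrt (4*\<alpha> - 4*\<alpha>\<^sup>2 + 1)) / (2 * (1 - \<alpha>)\<^sup>2)"

definition gammaA :: "real \<Rightarrow> real" where
  "gammaA \<alpha> = \<alpha> * ln (((1 / kappaA \<alpha>) * sqrt (ustarA \<alpha>) + 1) / (sqrt (ustarA \<alpha>) - 1))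
               + sqrt (ustarA \<alpha>)"

definition xstarA :: "real \<Rightarrow> real \<Rightarrow> real" where
  "xstarA \<alpha> T = exp ((1 / \<alpha>) * (gammaA \<alpha> - T))"

definition M0A :: "real \<Rightarrow> real" where
  "M0A \<sigma> = 2 * max (max (\<sigma>\<^sup>2 / 4) (1 + real_of_int (ceiling (9 * pi\<^sup>2 / \<sigma>\<^sup>2))))
                    (2 * real_of_int (ceiling ((1 + sqrt (pi / \<sigma>)) ^ 4)))"

definition UpsA :: "real \<Rightarrow> real \<Rightarrow> nat \<Rightarrow> real set" where
  "UpsA \<alpha> \<sigma> N1 = {x. xstarA \<alpha> (TA \<alpha> \<sigma> N1) \<le> x \<and> x \<le> 1 \<and>
      (TA \<alpha> \<sigma> N1 + \<alpha> * ln x)\<^sup>2 - \<alpha>\<^sup>2 * pi\<^sup>2 > M0A \<sigma> * hA \<alpha> \<sigma>}"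

end

(*
  Write s = sqrt u and L = T + alpha ln x. Then f(u,x) = (sin (alpha pi) / (alpha pi)) g(s) with
  g(s) = e^(s - T) / (2 s (1 + e^((s - L)/alpha))), and the prefactor lies in [0, 1].

  Membership x in Upsilon gives L^2 > 19 pi^2 alpha^2 + 2h and h <= 2 alpha |L|. The first bound keeps
  |1 + e^((s - L)/alpha)| >= 1/2 along the whole range |Im u| <= 4 alpha pi L: if Re s is within alpha
  of L, then Re s is large, Im s = Im u / (2 Re s) is small, and a negative cos (Im s / alpha) would
  contradict (Re s)^2 - (Im s)^2 = h.

  With the denominator under control, the mean value inequality on the segment from h - it to h + it
  bounds the difference f(h + it) - f(h - it) by 18 t e^(h + 4 - T) / h^2 for t <= 1, while for t >= 1
  each term is at most 4 e^(-T) (e^(sqrt h) / sqrt h) (e^(sqrt t) / sqrt t), because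
  Re s <= sqrt h + (3/4) sqrt t. Integrating these majorants against e^(-2 n pi t / h) gives the claim
  with C = 18 e^4.
*)

theory Submission
  imports Defs
begin

lemma integrable_on_exp_sqrt_div_sqrt_exp_minus:
  fixes c :: real assumes c: "0 < c"
  shows "(\<lambda>t. exp (sqrt t) / sqrt t * exp (- c * t)) integrable_on {1..}"
proof -
  let ?g = "\<lambda>t. exp (1 / (2*c)) * exp (- (c/2) * t)"
  have g: "?g integrable_on {1..}"
    using integrable_on_cmult_left[OF integrable_on_exp_minus_to_infinity[of "c/2" 1]] c by simp
  have bound: "norm (exp (sqrt t) / sqrt t * exp (- c * t)) \<le> ?g t" if "t \<in> {1..}" for t
  proof -
    have t: "1 \<le> sqrt t" "sqrt t ^ 2 = t" using that by auto
    have "sqrt t - c * t \<le> 1 / (2*c) - (c/2) * t"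
      using c t(2) zero_le_power2[of "c * sqrt t - 1"]
      by (simp add: field_simps power2_eq_square)
    have "norm (exp (sqrt t) / sqrt t * exp (- c * t)) = exp (sqrt t) / sqrt t * exp (- c * t)"
      using t by simp
    also have "\<dots> \<le> exp (sqrt t) * exp (- c * t)"
      using t by (intro mult_right_mono) (auto simp: divide_le_eq)
    also have "\<dots> \<le> ?g t"
      using \<open>sqrt t - c * t \<le> _\<close> by (simp flip: exp_add)
    finally show ?thesis .
  qed
  have "continuous_on {1..} (\<lambda>t. exp (sqrt t) / sqrt t * exp (- c * t))"
    by (intro continuous_intros) auto
  then have "(\<lambda>t. exp (sqrt t) / sqrt t * exp (- c * t)) absolutely_integrable_on {1..}"
    by (intro measurable_bounded_by_integrable_imp_absolutely_integrable[OF
          continuous_imp_measurable_on_sets_lebesgue _ g bound]) auto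
  then show ?thesis using set_lebesgue_integral_eq_integral(1) by blast
qed

lemma norm_integral_le_split_at_one:
  fixes \<Phi> :: "real \<Rightarrow> 'a::banach" and A B\<^sub>1 B\<^sub>2 c :: real
  assumes \<Phi>: "continuous_on {0..A} \<Phi>" and c: "0 < c" and B: "0 \<le> B\<^sub>1" "0 \<le> B\<^sub>2"
    and small: "\<And>t. t \<in> {0..A} \<Longrightarrow> t \<le> 1 \<Longrightarrow> norm (\<Phi> t) \<le> B\<^sub>1 * (t * exp (- c * t))"
    and large: "\<And>t. t \<in> {1..A} \<Longrightarrow> norm (\<Phi> t) \<le> B\<^sub>2 * (exp (sqrt t) / sqrt t * exp (- c * t))"
  shows "norm (integral {0..A} \<Phi>)
           \<le> B\<^sub>1 * integral {0..1} (\<lambda>t. t * exp (- c * t))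
             + B\<^sub>2 * integral {1..} (\<lambda>t. exp (sqrt t) / sqrt t * exp (- c * t))"
proof -
  define G\<^sub>1 where "G\<^sub>1 = (\<lambda>t. B\<^sub>1 * (t * exp (- c * t)))"
  define G\<^sub>2 where "G\<^sub>2 = (\<lambda>t::real. B\<^sub>2 * (exp (sqrt t) / sqrt t * exp (- c * t)))"
  have int\<Phi>: "\<Phi> integrable_on {0..A}" using \<Phi> by (rule integrable_continuous_interval)
  have intG\<^sub>1: "G\<^sub>1 integrable_on {a..b}" for a b
    unfolding G\<^sub>1_def by (intro integrable_continuous_interval continuous_intros)
  have intG\<^sub>2: "G\<^sub>2 integrable_on {1..}"
    unfolding G\<^sub>2_def using integrable_on_cmult_left[OF integrable_on_exp_sqrt_div_sqrt_exp_minus[OF c]]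
    by simp
  have G\<^sub>1: "0 \<le> G\<^sub>1 t" if "0 \<le> t" for t unfolding G\<^sub>1_def using B that by simp
  have G\<^sub>2: "0 \<le> G\<^sub>2 t" if "1 \<le> t" for t unfolding G\<^sub>2_def using B that by simp
  have "integral {1..} G\<^sub>2 \<ge> 0" using G\<^sub>2 by (intro integral_nonneg intG\<^sub>2) auto
  have small_part: "norm (integral {0..min A 1} \<Phi>) \<le> integral {0..1} G\<^sub>1"
  proof -
    have "norm (integral {0..min A 1} \<Phi>) \<le> integral {0..min A 1} G\<^sub>1"
      using small by (intro integral_norm_bound_integral integrable_on_subinterval[OF int\<Phi>] intG\<^sub>1)
        (auto simp: G\<^sub>1_def)
    also have "\<dots> \<le> integral {0..1} G\<^sub>1" using G\<^sub>1 by (intro integral_subset_le intG\<^sub>1) auto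
    finally show ?thesis .
  qed
  have "norm (integral {0..A} \<Phi>) \<le> integral {0..1} G\<^sub>1 + integral {1..} G\<^sub>2"
  proof (cases "A \<le> 1")
    case True
    then show ?thesis using small_part \<open>integral {1..} G\<^sub>2 \<ge> 0\<close> by (simp add: min_def)
  next
    case False
    have "integral {0..A} \<Phi> = integral {0..1} \<Phi> + integral {1..A} \<Phi>"
      using False int\<Phi> by (intro Henstock_Kurzweil_Integration.integral_combine[symmetric]) auto
    moreover have "norm (integral {1..A} \<Phi>) \<le> integral {1..A} G\<^sub>2"
      using large by (intro integral_norm_bound_integral integrable_on_subinterval[OF int\<Phi>]
          integrable_on_subinterval[OF intG\<^sub>2]) (auto simp: G\<^sub>2_def)
    moreover have "integral {1..A} G\<^sub>2 \<le> integral {1..} G\<^sub>2"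
      using G\<^sub>2 by (intro integral_subset_le integrable_on_subinterval[OF intG\<^sub>2] intG\<^sub>2) auto
    ultimately show ?thesis
      using small_part False norm_triangle_ineq[of "integral {0..1} \<Phi>" "integral {1..A} \<Phi>"]
      by (simp add: min_def)
  qed
  then show ?thesis unfolding G\<^sub>1_def G\<^sub>2_def integral_mult_right .
qed

lemma sin_div_self_bounds:
  fixes y :: real assumes "0 < y" "y \<le> pi"
  shows "0 \<le> sin y / y" "sin y / y \<le> 1"
  using assms sin_ge_zero[of y] sin_x_le_x[of y] by (auto simp: divide_le_eq)

lemma exp_bounds_of_le_add_one:
  fixes y X :: real assumes y: "0 \<le> y" and X: "X \<le> y + 1"
  shows "y\<^sup>2 * exp X \<le> exp (y\<^sup>2 + 4)" "y * exp X \<le> exp (y\<^sup>2 + 4)" "exp (2 * X) \<le> exp (y\<^sup>2 + 4)"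
proof -
  have y_exp: "y \<le> exp y" using exp_ge_add_one_self[of y] by linarith
  have "y\<^sup>2 * exp X \<le> (exp y)\<^sup>2 * exp (y + 1)"
    using y y_exp X by (intro mult_mono power_mono) auto
  also have "\<dots> = exp (3 * y + 1)" by (simp add: power2_eq_square flip: exp_add)
  also have "\<dots> \<le> exp (y\<^sup>2 + 4)"
    using zero_le_power2[of "y - 3/2"] by (simp add: power2_eq_square algebra_simps)
  finally show "y\<^sup>2 * exp X \<le> exp (y\<^sup>2 + 4)" .
  have "y * exp X \<le> exp y * exp (y + 1)"
    using y y_exp X by (intro mult_mono) auto
  also have "\<dots> = exp (2 * y + 1)" by (simp flip: exp_add)
  also have "\<dots> \<le> exp (y\<^sup>2 + 4)"
    using zero_le_power2[of "y - 1"] by (simp add: power2_eq_square algebra_simps)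
  finally show "y * exp X \<le> exp (y\<^sup>2 + 4)" .
  show "exp (2 * X) \<le> exp (y\<^sup>2 + 4)"
    using X zero_le_power2[of "y - 1"] by (simp add: power2_eq_square algebra_simps)
qed

lemma mul_exp_minus_abs_diff_le:
  fixes \<alpha> X L :: real assumes "0 < \<alpha>" "\<alpha> \<le> 1"
  shows "L * exp (X - \<bar>X - L\<bar> / \<alpha>) \<le> exp (2 * X)"
proof -
  consider "L \<le> 0" | "L \<le> X + 1" | "0 < L" "X + 1 < L" by linarith
  then show ?thesis
  proof cases
    case 1
    then show ?thesis by (smt (verit) exp_gt_zero mult_nonpos_nonneg)
  next
    case 2
    then have "L \<le> exp X" using exp_ge_add_one_self[of X] by linarith
    then have "L * exp (X - \<bar>X - L\<bar> / \<alpha>) \<le> exp X * exp X"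
      using assms by (intro mult_mono) auto
    then show ?thesis by (simp flip: exp_add)
  next
    case 3
    have "\<bar>X - L\<bar> \<le> \<bar>X - L\<bar> / \<alpha>" using assms by (simp add: le_divide_eq mult_left_le)
    then have "L * exp (X - \<bar>X - L\<bar> / \<alpha>) \<le> L * exp (2 * X - L)"
      using 3 by (intro mult_left_mono) auto
    also have "\<dots> = L * exp (- L) * exp (2 * X)" by (simp flip: exp_add)
    also have "\<dots> \<le> exp (2 * X)"
      using exp_ge_add_one_self[of L] by (simp add: exp_minus field_simps del: exp_ge_add_one_self)
    finally show ?thesis .
  qed
qed

section \<open>Square roots on the line Re u = h\<close>

lemma csqrt_Complex_components:
  fixes h \<tau> :: real
  defines "s \<equiv> csqrt (Complex h \<tau>)"
  shows "(Re s)\<^sup>2 - (Im s)\<^sup>2 = h" "2 * Re s * Im s = \<tau>"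
proof -
  have "s\<^sup>2 = Complex h \<tau>" unfolding s_def by simp
  from arg_cong[OF this, of Re] arg_cong[OF this, of Im]
  show "(Re s)\<^sup>2 - (Im s)\<^sup>2 = h" "2 * Re s * Im s = \<tau>"
    by (simp_all add: power2_eq_square algebra_simps)
qed

lemma Re_csqrt_Complex_pos: "0 < h \<Longrightarrow> 0 < Re (csqrt (Complex h \<tau>))"
  using Re_csqrt[of "Complex h \<tau>"] csqrt_Complex_components(1)[of h \<tau>]
  by (metis diff_gt_0_iff_gt less_eq_real_def power2_eq_square zero_less_power2
        mult_zero_left not_less_iff_gr_or_eq)

lemma norm_csqrt_Complex_sq_ge: "h \<le> (norm (csqrt (Complex h \<tau>)))\<^sup>2"
  using complex_Re_le_cmod[of "Complex h \<tau>"] by simp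

lemma Re_csqrt_Complex_sq_le:
  assumes "0 \<le> h" shows "2 * (Re (csqrt (Complex h \<tau>)))\<^sup>2 \<le> 2 * h + \<bar>\<tau>\<bar>"
proof -
  define s where "s = csqrt (Complex h \<tau>)"
  have "(Re s)\<^sup>2 + (Im s)\<^sup>2 = (norm s)\<^sup>2" by (simp add: cmod_power2)
  also have "\<dots> = cmod (Complex h \<tau>)" unfolding s_def by simp
  also have "\<dots> \<le> h + \<bar>\<tau>\<bar>" using cmod_le[of "Complex h \<tau>"] assms by simp
  finally show ?thesis using csqrt_Complex_components(1)[of h \<tau>] unfolding s_def by linarith
qed

lemma Re_csqrt_Complex_le:
  assumes "0 \<le> h" shows "Re (csqrt (Complex h \<tau>)) \<le> sqrt h + 3/4 * sqrt \<bar>\<tau>\<bar>"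
proof (rule power2_le_imp_le)
  have "(sqrt h + 3/4 * sqrt \<bar>\<tau>\<bar>)\<^sup>2 = h + 3/2 * (sqrt h * sqrt \<bar>\<tau>\<bar>) + 9/16 * \<bar>\<tau>\<bar>"
    using assms by (simp add: power2_eq_square algebra_simps)
  moreover have "0 \<le> sqrt h * sqrt \<bar>\<tau>\<bar>" using assms by simp
  ultimately show "(Re (csqrt (Complex h \<tau>)))\<^sup>2 \<le> (sqrt h + 3/4 * sqrt \<bar>\<tau>\<bar>)\<^sup>2"
    using Re_csqrt_Complex_sq_le[OF assms, of \<tau>] by linarith
qed (use assms in simp)

section \<open>The denominator\<close>

lemma abs_less_3pi_half_if_cos_neg:
  fixes \<theta> :: real assumes "cos \<theta> < 0" "\<bar>\<theta>\<bar> \<le> 5*pi/2"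
  shows "\<bar>\<theta>\<bar> < 3*pi/2"
proof (rule ccontr)
  assume "\<not> \<bar>\<theta>\<bar> < 3*pi/2"
  then have "0 \<le> cos (\<bar>\<theta>\<bar> - 2*pi)" using assms(2) by (intro cos_ge_zero) auto
  then show False using assms(1) by (simp add: cos_diff)
qed

lemma norm_one_add_exp_ge_half:
  fixes w :: complex assumes "0 \<le> cos (Im w) \<or> ln 2 \<le> \<bar>Re w\<bar>"
  shows "1/2 \<le> norm (1 + exp w)"
proof -
  consider "0 \<le> cos (Im w)" | "Re w \<le> - ln 2" | "ln 2 \<le> Re w" using assms by linarith
  then show ?thesis
  proof cases
    case 1
    then have "1 \<le> Re (1 + exp w)" by (simp add: Re_exp)
    then show ?thesis using complex_Re_le_cmod[of "1 + exp w"] by linarith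
  next
    case 2
    then have "norm (exp w) \<le> 1/2" using exp_le_cancel_iff[of "Re w" "- ln 2"] by (simp add: exp_minus)
    then show ?thesis using norm_triangle_ineq4[of "1 + exp w" "exp w"] by simp
  next
    case 3
    then have "2 \<le> norm (exp w)" using exp_le_cancel_iff[of "ln 2" "Re w"] by simp
    then show ?thesis using norm_triangle_ineq4[of "1 + exp w" 1] by simp
  qed
qed

lemma norm_exp_div_norm_one_add_exp_sq_le:
  fixes w :: complex assumes "1/2 \<le> norm (1 + exp w)"
  shows "norm (exp w) / (norm (1 + exp w))\<^sup>2 \<le> 16 * exp (- \<bar>Re w\<bar>)"
proof -
  define N where "N = norm (1 + exp w)"
  have N: "1/2 \<le> N" using assms unfolding N_def .
  show ?thesis
  proof (cases "Re w \<le> 0")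
    case True
    have "(1/2)\<^sup>2 \<le> N\<^sup>2" using N by (intro power_mono) auto
    then have "exp (Re w) / N\<^sup>2 \<le> exp (Re w) / (1/2)\<^sup>2" using N by (intro divide_left_mono) auto
    also have "\<dots> \<le> 16 * exp (Re w)" by (simp add: power2_eq_square)
    finally show ?thesis using True unfolding N_def by simp
  next
    case False
    have "exp (Re w) \<le> N + 1"
      using norm_triangle_ineq4[of "1 + exp w" 1] unfolding N_def by simp
    then have "exp (Re w) / 4 \<le> N" using N by linarith
    then have "(exp (Re w) / 4)\<^sup>2 \<le> N\<^sup>2" by (intro power_mono) auto
    then have "exp (Re w) / N\<^sup>2 \<le> exp (Re w) / (exp (Re w) / 4)\<^sup>2"
      using N by (intro divide_left_mono) auto
    also have "\<dots> = 16 * exp (- Re w)" by (simp add: power2_eq_square exp_minus field_simps)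
    finally show ?thesis using False unfolding N_def by simp
  qed
qed

lemma cos_Im_csqrt_Complex_div_nonneg:
  fixes \<alpha> h L \<tau> :: real
  assumes \<alpha>: "0 < \<alpha>" and h: "0 < h" and L: "0 < L" "19*pi\<^sup>2*\<alpha>\<^sup>2 + 2*h < L\<^sup>2"
    and \<tau>: "\<bar>\<tau>\<bar> \<le> 4*\<alpha>*pi*L" and near: "\<bar>Re (csqrt (Complex h \<tau>)) - L\<bar> < \<alpha>"
  shows "0 \<le> cos (Im (csqrt (Complex h \<tau>)) / \<alpha>)"
proof (rule ccontr)
  define X Y where "X = Re (csqrt (Complex h \<tau>))" and "Y = Im (csqrt (Complex h \<tau>))"
  assume "\<not> 0 \<le> cos (Y / \<alpha>)"
  have XY: "X\<^sup>2 - Y\<^sup>2 = h" "2 * X * Y = \<tau>"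
    using csqrt_Complex_components[of h \<tau>] unfolding X_def Y_def by auto
  have pi2: "9 < pi\<^sup>2" using pi_gt3 power_strict_mono[of 3 pi 2] by simp
  have "9 * \<alpha>\<^sup>2 < pi\<^sup>2 * \<alpha>\<^sup>2" using pi2 \<alpha> by simp
  moreover have L2: "19 * (pi\<^sup>2 * \<alpha>\<^sup>2) + 2*h < L\<^sup>2" using L(2) by (simp add: mult.assoc)
  moreover have "(13*\<alpha>)\<^sup>2 = 169 * \<alpha>\<^sup>2" by (simp add: power_mult_distrib)
  ultimately have "(13*\<alpha>)\<^sup>2 < L\<^sup>2" using h zero_le_power2[of \<alpha>] by linarith
  then have L13: "13*\<alpha> < L" using L(1) power_less_imp_less_base by fastforce
  then have X: "12*L/13 < X" using near[folded X_def] by linarith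
  then have "0 < X" using L(1) by linarith
  then have "\<bar>Y\<bar> * (2*X) = \<bar>\<tau>\<bar>" unfolding XY(2)[symmetric] by (simp add: abs_mult mult_ac)
  also have "\<dots> \<le> (\<alpha>*pi) * (4*L)" using \<tau> by (simp add: mult_ac)
  also have "\<dots> < (\<alpha>*pi) * (13/3 * X)" using X \<alpha> by (intro mult_strict_left_mono) auto
  finally have "\<bar>Y / \<alpha>\<bar> < 13*pi/6" using \<open>0 < X\<close> \<alpha> by (simp add: field_simps)
  then have "\<bar>Y / \<alpha>\<bar> < 3*pi/2"
    using abs_less_3pi_half_if_cos_neg[of "Y / \<alpha>"] \<open>\<not> 0 \<le> cos (Y / \<alpha>)\<close> pi_gt_zero by linarith
  then have "\<bar>Y\<bar> < 3/2*pi*\<alpha>" using \<alpha> by (simp add: field_simps)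
  then have Y2: "Y\<^sup>2 < 9/4 * (pi\<^sup>2 * \<alpha>\<^sup>2)"
    using power_strict_mono[of "\<bar>Y\<bar>" "3/2*pi*\<alpha>" 2] by (simp add: power_mult_distrib power_divide)
  have "(L - \<alpha>)\<^sup>2 < X\<^sup>2" using near[folded X_def] L13 \<alpha> by (intro power_strict_mono) auto
  moreover have "11/13 * L\<^sup>2 \<le> (L - \<alpha>)\<^sup>2"
  proof -
    have "13 * (\<alpha> * L) < L\<^sup>2"
      using mult_strict_right_mono[OF L13 L(1)] by (simp add: power2_eq_square mult_ac)
    moreover have "(L - \<alpha>)\<^sup>2 = L\<^sup>2 - 2 * (\<alpha> * L) + \<alpha>\<^sup>2" by (simp add: power2_diff mult_ac)
    ultimately show ?thesis using zero_le_power2[of \<alpha>] by linarith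
  qed
  ultimately show False
    using XY(1) Y2 L2 h zero_le_power2[of Y] by linarith
qed

lemma norm_one_add_exp_csqrt_Complex_ge_half:
  fixes \<alpha> h L \<tau> :: real
  assumes \<alpha>: "0 < \<alpha>" and h: "0 < h" and L: "0 < L" "19*pi\<^sup>2*\<alpha>\<^sup>2 + 2*h < L\<^sup>2"
    and \<tau>: "\<bar>\<tau>\<bar> \<le> 4*\<alpha>*pi*L"
  shows "1/2 \<le> norm (1 + exp ((csqrt (Complex h \<tau>) - of_real L) / of_real \<alpha>))"
proof (rule norm_one_add_exp_ge_half)
  define s where "s = csqrt (Complex h \<tau>)"
  have "\<bar>Re s - L\<bar> < \<alpha>" if "\<bar>Re s - L\<bar> < \<alpha> * ln 2"
    using that \<alpha> ln_2_less_1 mult_strict_left_mono[of "ln 2" 1 \<alpha>] by linarith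
  then have "0 \<le> cos (Im s / \<alpha>) \<or> \<alpha> * ln 2 \<le> \<bar>Re s - L\<bar>"
    using cos_Im_csqrt_Complex_div_nonneg[OF assms, folded s_def] by fastforce
  then show "0 \<le> cos (Im ((s - of_real L) / of_real \<alpha>)) \<or>
      ln 2 \<le> \<bar>Re ((s - of_real L) / of_real \<alpha>)\<bar>"
    using \<alpha> by (auto simp: le_divide_eq mult.commute)
qed

section \<open>The integrand in the variable s = sqrt u\<close>

definition gA :: "real \<Rightarrow> real \<Rightarrow> real \<Rightarrow> complex \<Rightarrow> complex" where
  "gA \<alpha> T L s = exp (s - of_real T) / (2 * s * (1 + exp ((s - of_real L) / of_real \<alpha>)))"

lemma fA_eq_gA:
  assumes "0 < x" "\<alpha> \<noteq> 0"
  shows "fA \<alpha> T u x = of_real (sin (\<alpha> * pi) / (\<alpha> * pi)) * gA \<alpha> T (T + \<alpha> * ln x) (csqrt u)"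
proof -
  define s where "s = csqrt u"
  define E where "E = exp ((s - of_real (T + \<alpha> * ln x)) / of_real \<alpha>)"
  define K :: complex where "K = of_real (sin (\<alpha> * pi) / (\<alpha> * pi))"
  have x: "(of_real x :: complex) \<noteq> 0" using assms(1) by simp
  have "exp ((s - of_real T) / of_real \<alpha>)
      = exp ((s - of_real (T + \<alpha> * ln x)) / of_real \<alpha> + of_real (ln x))"
    using assms(2) by (simp add: field_simps)
  also have "\<dots> = of_real x * E"
    unfolding E_def using assms(1) by (simp add: exp_add exp_of_real)
  finally have den: "exp ((s - of_real T) / of_real \<alpha>) + of_real x = of_real x * (1 + E)"
    by (simp add: algebra_simps)
  have "fA \<alpha> T u x = K * (1 / (2 * s)) * ((of_real x * exp (s - of_real T)) / (of_real x * (1 + E)))"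
    unfolding fA_def K_def s_def[symmetric] den by (simp only: times_divide_eq_right)
  also have "\<dots> = K * (exp (s - of_real T) / (2 * s * (1 + E)))"
    by (simp only: mult_divide_mult_cancel_left[OF x] mult.assoc times_divide_times_eq mult_1_left)
  finally show ?thesis unfolding gA_def K_def E_def s_def .
qed

lemma has_field_derivative_gA:
  fixes \<alpha> T L :: real and s :: complex and E :: "complex \<Rightarrow> complex"
  defines "E \<equiv> \<lambda>s. exp ((s - of_real L) / of_real \<alpha>)"
  assumes "s \<noteq> 0" "1 + E s \<noteq> 0" "\<alpha> \<noteq> 0"
  shows "(gA \<alpha> T L has_field_derivative gA \<alpha> T L s * (1 - 1/s - E s / (\<alpha> * (1 + E s)))) (at s)"
proof -
  have E': "(E has_field_derivative E s / of_real \<alpha>) (at s)"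
    unfolding E_def using assms(4) by (auto intro!: derivative_eq_intros)
  have "((\<lambda>s. exp (s - of_real T) / (2 * s * (1 + E s))) has_field_derivative
      (exp (s - of_real T) * (2 * s * (1 + E s))
        - exp (s - of_real T) * (2 * (1 + E s) + 2 * s * (E s / of_real \<alpha>)))
        / (2 * s * (1 + E s) * (2 * s * (1 + E s)))) (at s)"
    using assms(2,3) by (auto intro!: DERIV_divide derivative_eq_intros E')
  moreover have "gA \<alpha> T L = (\<lambda>s. exp (s - of_real T) / (2 * s * (1 + E s)))"
    unfolding gA_def E_def by (rule ext) simp
  moreover have alg: "(e * (2 * s * d) - e * (2 * d + 2 * s * ((d - 1) / of_real \<alpha>)))
        / (2 * s * d * (2 * s * d))
      = e / (2 * s * d) * (1 - 1/s - (d - 1) / (of_real \<alpha> * d))" if "d \<noteq> 0" for e d :: complex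
    using that assms(2,4) by (simp add: field_simps)
  ultimately show ?thesis using alg[of "1 + E s"] assms(3) by simp
qed

lemma norm_gA:
  "norm (gA \<alpha> T L s) = exp (Re s - T) / (2 * norm s * norm (1 + exp ((s - of_real L) / of_real \<alpha>)))"
  by (simp add: gA_def norm_mult norm_divide)

lemma norm_gA_csqrt_Complex_le:
  fixes \<alpha> h L T \<tau> :: real
  assumes \<alpha>: "0 < \<alpha>" and h: "0 < h" and L: "0 < L" "19*pi\<^sup>2*\<alpha>\<^sup>2 + 2*h < L\<^sup>2"
    and \<tau>: "\<bar>\<tau>\<bar> \<le> 4*\<alpha>*pi*L" "0 < \<bar>\<tau>\<bar>"
  shows "norm (gA \<alpha> T L (csqrt (Complex h \<tau>)))
           \<le> 4 * exp (- T) * (exp (sqrt h) / sqrt h) * (exp (sqrt \<bar>\<tau>\<bar>) / sqrt \<bar>\<tau>\<bar>)"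
proof -
  define s where "s = csqrt (Complex h \<tau>)"
  define t where "t = \<bar>\<tau>\<bar>"
  define N where "N = norm (1 + exp ((s - of_real L) / of_real \<alpha>))"
  have N: "1/2 \<le> N"
    using norm_one_add_exp_csqrt_Complex_ge_half[OF \<alpha> h L \<tau>(1)] unfolding s_def N_def .
  have n: "sqrt h \<le> norm s"
    using real_sqrt_le_mono[OF norm_csqrt_Complex_sq_ge[of h \<tau>]] unfolding s_def by simp
  have X: "Re s \<le> sqrt h + 3/4 * sqrt t"
    using Re_csqrt_Complex_le[of h \<tau>] h unfolding s_def t_def by simp
  \<comment> \<open>The slack left by the constant 3/4 < 1 absorbs the factor sqrt t.\<close>
  have t: "0 < sqrt t" "sqrt t \<le> 4 * exp (sqrt t / 4)"
    using \<tau>(2) exp_ge_add_one_self[of "sqrt t / 4"] unfolding t_def by (simp, linarith)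
  have n0: "0 < norm s" using n h by (meson less_le_trans real_sqrt_gt_zero)
  have "norm s * 1 \<le> norm s * (2 * N)" using N n0 by (intro mult_left_mono) auto
  then have "norm (gA \<alpha> T L s) \<le> exp (Re s - T) / norm s"
    unfolding norm_gA N_def[symmetric] using N n0 by (intro divide_left_mono) (auto simp: mult_ac)
  also have "\<dots> \<le> exp (sqrt h + 3/4 * sqrt t - T) / sqrt h"
    using X n h by (intro frac_le) auto
  also have "\<dots> = exp (- T) * (exp (sqrt h) / sqrt h) * exp (sqrt t) * (1 / exp (sqrt t / 4))"
  proof -
    have e: "sqrt h + 3/4 * sqrt t - T = - T + sqrt h + (sqrt t - sqrt t / 4)" by simp
    show ?thesis by (subst e, simp only: exp_add exp_diff) simp
  qed
  also have "\<dots> \<le> exp (- T) * (exp (sqrt h) / sqrt h) * exp (sqrt t) * (4 / sqrt t)"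
    using t h by (intro mult_left_mono) (auto simp: field_simps)
  also have "\<dots> = 4 * exp (- T) * (exp (sqrt h) / sqrt h) * (exp (sqrt t) / sqrt t)" by simp
  finally show ?thesis unfolding s_def t_def .
qed

lemma norm_deriv_gA_csqrt_le:
  fixes \<alpha> T L :: real and s E :: complex
  defines "E \<equiv> exp ((s - of_real L) / of_real \<alpha>)"
  assumes \<alpha>: "0 < \<alpha>" and s: "s \<noteq> 0" and N: "1/2 \<le> norm (1 + E)"
  shows "norm (gA \<alpha> T L s * (1 - 1/s - E / (\<alpha> * (1 + E))) * inverse (2 * s))
    \<le> exp (Re s - T) / 2 * (1 / (norm s)\<^sup>2 + 1 / (norm s)^3
                               + 8 * exp (- \<bar>Re s - L\<bar> / \<alpha>) / (\<alpha> * (norm s)\<^sup>2))"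
proof -
  define n N Q \<rho> where "n = norm s" and "N = norm (1 + E)" and "Q = exp (Re s - T)"
    and "\<rho> = exp (- \<bar>Re s - L\<bar> / \<alpha>)"
  have n: "0 < n" using s unfolding n_def by simp
  have N0: "0 < N" using N unfolding N_def by linarith
  have "norm E / N\<^sup>2 \<le> 16 * exp (- \<bar>Re ((s - of_real L) / of_real \<alpha>)\<bar>)"
    using norm_exp_div_norm_one_add_exp_sq_le N unfolding E_def N_def by blast
  then have E: "norm E / N\<^sup>2 \<le> 16 * \<rho>" unfolding \<rho>_def using \<alpha> by simp
  have F: "norm (1 - 1/s - E / (\<alpha> * (1 + E))) \<le> 1 + 1/n + norm E / (\<alpha> * N)"
    using norm_triangle_ineq4[of "1 - 1/s" "E / (\<alpha> * (1 + E))"] norm_triangle_ineq4[of 1 "1/s"] \<alpha>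
    unfolding n_def N_def by (simp add: norm_divide norm_mult)
  have "norm (gA \<alpha> T L s) = Q / (2*n*N)"
    unfolding norm_gA Q_def n_def N_def E_def ..
  then have "norm (gA \<alpha> T L s * (1 - 1/s - E / (\<alpha> * (1 + E))) * inverse (2 * s))
      = Q / (2*n*N) * norm (1 - 1/s - E / (\<alpha> * (1 + E))) / (2*n)"
    by (simp add: norm_mult norm_divide n_def flip: divide_inverse)
  also have "\<dots> \<le> Q / (2*n*N) * (1 + 1/n + norm E / (\<alpha> * N)) / (2*n)"
    using n N0 F unfolding Q_def by (intro divide_right_mono mult_left_mono) auto
  also have "\<dots> = Q / (4*n\<^sup>2) * (1/N + 1/(n*N) + (norm E / N\<^sup>2) / \<alpha>)"
    using n N0 \<alpha> by (simp add: field_simps power2_eq_square)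
  also have "\<dots> \<le> Q / (4*n\<^sup>2) * (2 + 2/n + 16 * \<rho> / \<alpha>)"
  proof -
    have "1/N \<le> 2" "1/(n*N) \<le> 2/n" using N[folded N_def] N0 n by (auto simp: field_simps)
    moreover have "(norm E / N\<^sup>2) / \<alpha> \<le> 16 * \<rho> / \<alpha>" using divide_right_mono[OF E] \<alpha> by simp
    ultimately show ?thesis unfolding Q_def using n by (intro mult_left_mono) auto
  qed
  also have "\<dots> = Q / 2 * (1 / n\<^sup>2 + 1 / n^3 + 8 * \<rho> / (\<alpha> * n\<^sup>2))"
    using n \<alpha> by (simp add: field_simps power2_eq_square power3_eq_cube)
  finally show ?thesis unfolding n_def Q_def \<rho>_def .
qed

lemma gA_deriv_majorant_le:
  fixes \<alpha> h L T X n :: real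
  assumes \<alpha>: "0 < \<alpha>" "\<alpha> \<le> 1" and h: "0 < h" "h \<le> 2 * \<alpha> * L"
    and X: "X \<le> sqrt h + 1" and n: "sqrt h \<le> n"
  shows "exp (X - T) / 2 * (1 / n\<^sup>2 + 1 / n^3 + 8 * exp (- \<bar>X - L\<bar> / \<alpha>) / (\<alpha> * n\<^sup>2))
           \<le> 9 * exp (h + 4) * exp (- T) / h\<^sup>2"
proof -
  have n0: "0 < n" using n h by (meson less_le_trans real_sqrt_gt_zero)
  have n2: "h \<le> n\<^sup>2" using power_mono[OF n, of 2] h by simp
  have n3: "h * sqrt h \<le> n^3"
    using mult_mono[OF n2 n] n0 h by (simp add: power3_eq_cube power2_eq_square)
  have bounds: "h * exp X \<le> exp (h + 4)" "sqrt h * exp X \<le> exp (h + 4)" "exp (2 * X) \<le> exp (h + 4)"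
    using exp_bounds_of_le_add_one[of "sqrt h" X] h X by auto
  have "exp X / n\<^sup>2 \<le> exp X / h" using h n2 n0 by (intro divide_left_mono) auto
  also have "\<dots> = h * exp X / h\<^sup>2" by (simp add: power2_eq_square)
  also have "\<dots> \<le> exp (h + 4) / h\<^sup>2" using bounds(1) by (simp add: divide_right_mono)
  finally have 1: "exp X / n\<^sup>2 \<le> exp (h + 4) / h\<^sup>2" .
  have "exp X / n^3 \<le> exp X / (h * sqrt h)" using h n3 n0 by (intro divide_left_mono) auto
  also have "\<dots> = sqrt h * exp X / h\<^sup>2" using h by (simp add: field_simps power2_eq_square)
  also have "\<dots> \<le> exp (h + 4) / h\<^sup>2" using bounds(2) by (simp add: divide_right_mono)
  finally have 2: "exp X / n^3 \<le> exp (h + 4) / h\<^sup>2" .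
  define \<rho> where "\<rho> = exp (- \<bar>X - L\<bar> / \<alpha>)"
  have "8 * \<rho> * exp X / (\<alpha> * n\<^sup>2) \<le> 8 * \<rho> * exp X / (\<alpha> * h)"
    using h n2 n0 \<alpha> by (intro divide_left_mono mult_left_mono) (auto simp: \<rho>_def)
  also have "\<dots> = 8 * (h / \<alpha>) * (\<rho> * exp X) / h\<^sup>2" using h by (simp add: power2_eq_square)
  also have "\<dots> \<le> 8 * (2 * L) * (\<rho> * exp X) / h\<^sup>2"
    using h \<alpha> by (intro divide_right_mono mult_right_mono mult_left_mono) (auto simp: \<rho>_def field_simps)
  also have "\<dots> = 16 * (L * exp (X - \<bar>X - L\<bar> / \<alpha>)) / h\<^sup>2"
    by (simp add: \<rho>_def exp_diff exp_minus field_simps)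
  also have "\<dots> \<le> 16 * exp (h + 4) / h\<^sup>2"
    using order_trans[OF mul_exp_minus_abs_diff_le[OF \<alpha>, of L X] bounds(3)]
    by (simp add: divide_right_mono)
  finally have 3: "8 * \<rho> * exp X / (\<alpha> * n\<^sup>2) \<le> 16 * exp (h + 4) / h\<^sup>2" .
  have "exp (X - T) / 2 * (1 / n\<^sup>2 + 1 / n^3 + 8 * \<rho> / (\<alpha> * n\<^sup>2))
      = exp (- T) / 2 * (exp X / n\<^sup>2 + exp X / n^3 + 8 * \<rho> * exp X / (\<alpha> * n\<^sup>2))"
    by (simp add: exp_diff exp_minus field_simps)
  also have "\<dots> \<le> exp (- T) / 2 * (18 * exp (h + 4) / h\<^sup>2)"
    using 1 2 3 by (intro mult_left_mono) auto
  finally show ?thesis unfolding \<rho>_def by (simp add: mult_ac)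
qed

lemma has_field_derivative_gA_csqrt_Complex:
  fixes \<alpha> h L T \<tau> :: real and s E :: complex
  defines "s \<equiv> csqrt (Complex h \<tau>)"
  defines "E \<equiv> exp ((s - of_real L) / of_real \<alpha>)"
  assumes \<alpha>: "0 < \<alpha>" and h: "0 < h" and L: "0 < L" "19*pi\<^sup>2*\<alpha>\<^sup>2 + 2*h < L\<^sup>2"
    and \<tau>: "\<bar>\<tau>\<bar> \<le> 4*\<alpha>*pi*L"
  shows "((\<lambda>u. gA \<alpha> T L (csqrt u)) has_field_derivative
           gA \<alpha> T L s * (1 - 1/s - E / (\<alpha> * (1 + E))) * inverse (2 * s)) (at (Complex h \<tau>))"
proof -
  have "s \<noteq> 0" using h unfolding s_def csqrt_eq_0 by (simp add: complex_eq_iff)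
  moreover have "1/2 \<le> norm (1 + E)"
    unfolding E_def s_def using norm_one_add_exp_csqrt_Complex_ge_half[OF \<alpha> h L \<tau>] .
  then have "1 + E \<noteq> 0" by auto
  ultimately have "(gA \<alpha> T L has_field_derivative gA \<alpha> T L s * (1 - 1/s - E / (\<alpha> * (1 + E)))) (at s)"
    using has_field_derivative_gA[of s L \<alpha> T] \<alpha> unfolding E_def by simp
  moreover have "Complex h \<tau> \<notin> \<real>\<^sub>\<le>\<^sub>0" using h by (auto simp: complex_nonpos_Reals_iff)
  ultimately show ?thesis unfolding s_def by (rule DERIV_chain2[OF _ has_field_derivative_csqrt])
qed

lemma norm_deriv_gA_csqrt_Complex_le:
  fixes \<alpha> h L T \<tau> :: real and s E :: complex
  defines "s \<equiv> csqrt (Complex h \<tau>)"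
  defines "E \<equiv> exp ((s - of_real L) / of_real \<alpha>)"
  assumes \<alpha>: "0 < \<alpha>" "\<alpha> \<le> 1" and h: "0 < h" "h \<le> 2 * \<alpha> * L"
    and L: "0 < L" "19*pi\<^sup>2*\<alpha>\<^sup>2 + 2*h < L\<^sup>2" and \<tau>: "\<bar>\<tau>\<bar> \<le> 1" "\<bar>\<tau>\<bar> \<le> 4*\<alpha>*pi*L"
  shows "norm (gA \<alpha> T L s * (1 - 1/s - E / (\<alpha> * (1 + E))) * inverse (2 * s))
           \<le> 9 * exp (h + 4) * exp (- T) / h\<^sup>2"
proof -
  have "0 < Re s" unfolding s_def using Re_csqrt_Complex_pos[OF h(1)] .
  then have "s \<noteq> 0" by auto
  moreover have "1/2 \<le> norm (1 + E)"
    unfolding E_def s_def using norm_one_add_exp_csqrt_Complex_ge_half[OF \<alpha>(1) h(1) L \<tau>(2)] .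
  ultimately have "norm (gA \<alpha> T L s * (1 - 1/s - E / (\<alpha> * (1 + E))) * inverse (2 * s))
      \<le> exp (Re s - T) / 2 * (1 / (norm s)\<^sup>2 + 1 / (norm s)^3
                               + 8 * exp (- \<bar>Re s - L\<bar> / \<alpha>) / (\<alpha> * (norm s)\<^sup>2))"
    unfolding E_def using norm_deriv_gA_csqrt_le \<alpha>(1) by blast
  also have "\<dots> \<le> 9 * exp (h + 4) * exp (- T) / h\<^sup>2"
  proof (rule gA_deriv_majorant_le[OF \<alpha> h])
    have "sqrt \<bar>\<tau>\<bar> \<le> 1" using \<tau>(1) by simp
    then show "Re s \<le> sqrt h + 1"
      using Re_csqrt_Complex_le[of h \<tau>, folded s_def] h by linarith
    show "sqrt h \<le> norm s"
      using real_sqrt_le_mono[OF norm_csqrt_Complex_sq_ge[of h \<tau>]] unfolding s_def by simp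
  qed
  finally show ?thesis .
qed

lemma norm_gA_csqrt_Complex_conj_diff_le_linear:
  fixes \<alpha> h L T t :: real
  assumes \<alpha>: "0 < \<alpha>" "\<alpha> \<le> 1" and h: "0 < h" "h \<le> 2 * \<alpha> * L"
    and L: "0 < L" "19*pi\<^sup>2*\<alpha>\<^sup>2 + 2*h < L\<^sup>2" and t: "0 \<le> t" "t \<le> 1" "t \<le> 4*\<alpha>*pi*L"
  shows "norm (gA \<alpha> T L (csqrt (Complex h t)) - gA \<alpha> T L (csqrt (Complex h (- t))))
           \<le> 18 * exp (h + 4) * exp (- T) / h\<^sup>2 * t"
proof -
  define S where "S = closed_segment (Complex h (- t)) (Complex h t)"
  define E where "E = (\<lambda>u. exp ((csqrt u - of_real L) / of_real \<alpha>))"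
  define g' where "g' = (\<lambda>u. gA \<alpha> T L (csqrt u) * (1 - 1 / csqrt u - E u / (\<alpha> * (1 + E u)))
                               * inverse (2 * csqrt u))"
  have S: "z = Complex h (Im z) \<and> \<bar>Im z\<bar> \<le> t" if "z \<in> S" for z
    using that t(1) unfolding S_def
    by (auto simp: closed_segment_same_Re closed_segment_eq_real_ivl complex_eq_iff)
  have "norm (gA \<alpha> T L (csqrt (Complex h t)) - gA \<alpha> T L (csqrt (Complex h (- t))))
      \<le> 9 * exp (h + 4) * exp (- T) / h\<^sup>2 * norm (Complex h t - Complex h (- t))"
  proof (rule field_differentiable_bound[where S = S and f' = g'])
    fix z assume "z \<in> S"
    then obtain \<tau> where z: "z = Complex h \<tau>" "\<bar>\<tau>\<bar> \<le> t" using S by blast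
    then show "((\<lambda>u. gA \<alpha> T L (csqrt u)) has_field_derivative g' z) (at z within S)"
      unfolding g'_def E_def using has_field_derivative_gA_csqrt_Complex[OF \<alpha>(1) h(1) L, of \<tau> T] t
      by (auto intro: has_field_derivative_at_within)
    show "norm (g' z) \<le> 9 * exp (h + 4) * exp (- T) / h\<^sup>2"
      unfolding g'_def E_def z using norm_deriv_gA_csqrt_Complex_le[OF \<alpha> h L] z t by simp
  qed (auto simp: S_def)
  also have "norm (Complex h t - Complex h (- t)) = 2 * t"
    using t(1) by (simp add: cmod_def real_sqrt_mult)
  finally show ?thesis by simp
qed

lemma norm_gA_csqrt_Complex_conj_diff_le_exp_sqrt:
  fixes \<alpha> h L T t :: real
  assumes \<alpha>: "0 < \<alpha>" and h: "0 < h" and L: "0 < L" "19*pi\<^sup>2*\<alpha>\<^sup>2 + 2*h < L\<^sup>2"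
    and t: "0 < t" "t \<le> 4*\<alpha>*pi*L"
  shows "norm (gA \<alpha> T L (csqrt (Complex h t)) - gA \<alpha> T L (csqrt (Complex h (- t))))
           \<le> 8 * exp (- T) * (exp (sqrt h) / sqrt h) * (exp (sqrt t) / sqrt t)"
proof -
  have "norm (gA \<alpha> T L (csqrt (Complex h \<tau>)))
      \<le> 4 * exp (- T) * (exp (sqrt h) / sqrt h) * (exp (sqrt t) / sqrt t)"
    if "\<bar>\<tau>\<bar> = t" for \<tau>
    using norm_gA_csqrt_Complex_le[OF \<alpha> h L, of \<tau> T] t that by auto
  from this[of t] this[of "- t"] show ?thesis
    using norm_triangle_ineq4[of "gA \<alpha> T L (csqrt (Complex h t))" "gA \<alpha> T L (csqrt (Complex h (- t)))"] t
    by simp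
qed

lemma continuous_on_gA_csqrt_conj_diff:
  fixes \<alpha> h L T c :: real
  assumes \<alpha>: "0 < \<alpha>" and h: "0 < h" and L: "0 < L" "19*pi\<^sup>2*\<alpha>\<^sup>2 + 2*h < L\<^sup>2"
  shows "continuous_on {0..4*\<alpha>*pi*L}
           (\<lambda>t. (gA \<alpha> T L (csqrt (Complex h t)) - gA \<alpha> T L (csqrt (Complex h (- t))))
                 * of_real (exp (- c * t)))"
proof (intro continuous_at_imp_continuous_on ballI continuous_intros)
  fix t assume "t \<in> {0..4*\<alpha>*pi*L}"
  then have "isCont (\<lambda>u. gA \<alpha> T L (csqrt u)) (Complex h \<tau>)" if "\<bar>\<tau>\<bar> = t" for \<tau>
    using has_field_derivative_gA_csqrt_Complex[OF \<alpha> h L, of \<tau> T] that by (auto intro: DERIV_isCont)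
  moreover have "isCont (\<lambda>t. Complex h t) t" "isCont (\<lambda>t. Complex h (- t)) t"
    unfolding Complex_eq by (intro continuous_intros)+
  ultimately show "isCont (\<lambda>t. gA \<alpha> T L (csqrt (Complex h t))) t"
    "isCont (\<lambda>t. gA \<alpha> T L (csqrt (Complex h (- t)))) t"
    using isCont_o2 \<open>t \<in> _\<close> by force+
qed

lemma norm_integral_gA_conj_diff_le:
  fixes \<alpha> h L T c :: real
  assumes \<alpha>: "0 < \<alpha>" "\<alpha> \<le> 1" and h: "0 < h" "h \<le> 2 * \<alpha> * L"
    and L: "0 < L" "19*pi\<^sup>2*\<alpha>\<^sup>2 + 2*h < L\<^sup>2" and c: "0 < c"
  shows "norm (integral {0..4*\<alpha>*pi*L}
            (\<lambda>t. (gA \<alpha> T L (csqrt (Complex h t)) - gA \<alpha> T L (csqrt (Complex h (- t))))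
                  * of_real (exp (- c * t))))
         \<le> 18 * exp 4 * ((exp h / h\<^sup>2) * integral {0..1} (\<lambda>t. t * exp (- c * t))
              + (exp (sqrt h) / sqrt h) * integral {1..} (\<lambda>t. exp (sqrt t) / sqrt t * exp (- c * t)))
            * exp (- T)"
proof -
  define B\<^sub>1 where "B\<^sub>1 = 18 * exp (h + 4) * exp (- T) / h\<^sup>2"
  define B\<^sub>2 where "B\<^sub>2 = 8 * exp (- T) * (exp (sqrt h) / sqrt h)"
  define I\<^sub>1 where "I\<^sub>1 = integral {0..1} (\<lambda>t. t * exp (- c * t))"
  define I\<^sub>2 where "I\<^sub>2 = integral {1..} (\<lambda>t. exp (sqrt t) / sqrt t * exp (- c * t))"
  have "norm (integral {0..4*\<alpha>*pi*L}
            (\<lambda>t. (gA \<alpha> T L (csqrt (Complex h t)) - gA \<alpha> T L (csqrt (Complex h (- t))))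
                  * of_real (exp (- c * t))))
        \<le> B\<^sub>1 * I\<^sub>1 + B\<^sub>2 * I\<^sub>2"
    unfolding I\<^sub>1_def I\<^sub>2_def
  proof (rule norm_integral_le_split_at_one[OF continuous_on_gA_csqrt_conj_diff[OF \<alpha>(1) h(1) L] c])
    show "0 \<le> B\<^sub>1" "0 \<le> B\<^sub>2" unfolding B\<^sub>1_def B\<^sub>2_def using h by auto
  next
    fix t assume "t \<in> {0..4*\<alpha>*pi*L}" "t \<le> 1"
    then show "norm ((gA \<alpha> T L (csqrt (Complex h t)) - gA \<alpha> T L (csqrt (Complex h (- t))))
        * of_real (exp (- c * t))) \<le> B\<^sub>1 * (t * exp (- c * t))"
      using mult_right_mono[OF norm_gA_csqrt_Complex_conj_diff_le_linear[OF \<alpha> h L, of t T],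
          of "exp (- c * t)"]
      unfolding B\<^sub>1_def by (simp add: norm_mult mult_ac)
  next
    fix t assume "t \<in> {1..4*\<alpha>*pi*L}"
    then show "norm ((gA \<alpha> T L (csqrt (Complex h t)) - gA \<alpha> T L (csqrt (Complex h (- t))))
        * of_real (exp (- c * t))) \<le> B\<^sub>2 * (exp (sqrt t) / sqrt t * exp (- c * t))"
      using mult_right_mono[OF norm_gA_csqrt_Complex_conj_diff_le_exp_sqrt[OF \<alpha>(1) h(1) L, of t T],
          of "exp (- c * t)"]
      unfolding B\<^sub>2_def by (simp add: norm_mult mult.assoc)
  qed
  also have "\<dots> \<le> 18 * exp 4 * ((exp h / h\<^sup>2) * I\<^sub>1 + (exp (sqrt h) / sqrt h) * I\<^sub>2) * exp (- T)"
  proof -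
    have "0 \<le> I\<^sub>2" unfolding I\<^sub>2_def
      by (intro integral_nonneg integrable_on_exp_sqrt_div_sqrt_exp_minus c) auto
    then have "B\<^sub>2 * I\<^sub>2 = 8 * ((exp (sqrt h) / sqrt h) * I\<^sub>2 * exp (- T))"
      and "0 \<le> (exp (sqrt h) / sqrt h) * I\<^sub>2 * exp (- T)"
      unfolding B\<^sub>2_def using h by (simp_all add: mult_ac)
    moreover have "8 \<le> 18 * exp (4::real)" using exp_ge_add_one_self[of 4] by linarith
    ultimately have "B\<^sub>2 * I\<^sub>2 \<le> 18 * exp 4 * ((exp (sqrt h) / sqrt h) * I\<^sub>2) * exp (- T)"
      using mult_right_mono by (metis mult.assoc)
    moreover have "B\<^sub>1 * I\<^sub>1 = 18 * exp 4 * ((exp h / h\<^sup>2) * I\<^sub>1) * exp (- T)"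
      unfolding B\<^sub>1_def by (simp add: exp_add)
    ultimately show ?thesis by (simp add: algebra_simps)
  qed
  finally show ?thesis unfolding I\<^sub>1_def I\<^sub>2_def .
qed

section \<open>The set Upsilon\<close>

lemma M0A_lower_bounds:
  fixes \<sigma> :: real assumes "0 < \<sigma>"
  shows "2 + 18 * pi\<^sup>2 / \<sigma>\<^sup>2 \<le> M0A \<sigma>" "\<sigma>\<^sup>2 / 2 \<le> M0A \<sigma>"
proof -
  define m where "m = max (max (\<sigma>\<^sup>2 / 4) (1 + of_int \<lceil>9 * pi\<^sup>2 / \<sigma>\<^sup>2\<rceil>))
    (2 * of_int \<lceil>(1 + sqrt (pi / \<sigma>)) ^ 4\<rceil>)"
  have "M0A \<sigma> = 2 * m" unfolding M0A_def m_def ..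
  moreover have "\<sigma>\<^sup>2 / 4 \<le> m" "1 + of_int \<lceil>9 * pi\<^sup>2 / \<sigma>\<^sup>2\<rceil> \<le> m"
    unfolding m_def by (meson max.cobounded1 max.cobounded2 order_trans)+
  moreover have "9 * pi\<^sup>2 / \<sigma>\<^sup>2 \<le> of_int \<lceil>9 * pi\<^sup>2 / \<sigma>\<^sup>2\<rceil>" by (rule le_of_int_ceiling)
  moreover have "18 * pi\<^sup>2 / \<sigma>\<^sup>2 = 2 * (9 * pi\<^sup>2 / \<sigma>\<^sup>2)" by simp
  ultimately show "2 + 18 * pi\<^sup>2 / \<sigma>\<^sup>2 \<le> M0A \<sigma>" "\<sigma>\<^sup>2 / 2 \<le> M0A \<sigma>" by linarith+
qed

lemma UpsA_bounds:
  fixes \<alpha> \<sigma> x :: real and N1 :: nat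
  defines "L \<equiv> TA \<alpha> \<sigma> N1 + \<alpha> * ln x" and "h \<equiv> hA \<alpha> \<sigma>"
  assumes \<alpha>: "0 < \<alpha>" and \<sigma>: "0 < \<sigma>" and x: "x \<in> UpsA \<alpha> \<sigma> N1"
  shows "0 < x" "19*pi\<^sup>2*\<alpha>\<^sup>2 + 2*h < L\<^sup>2" "h \<le> 2 * \<alpha> * \<bar>L\<bar>"
proof -
  have x: "xstarA \<alpha> (TA \<alpha> \<sigma> N1) \<le> x" "\<alpha>\<^sup>2 * pi\<^sup>2 + M0A \<sigma> * h < L\<^sup>2"
    using x unfolding UpsA_def L_def h_def by auto
  then show "0 < x" unfolding xstarA_def by (meson exp_gt_zero less_le_trans)
  have h: "h = \<sigma>\<^sup>2 * \<alpha>\<^sup>2" "0 < h" unfolding h_def hA_def using \<alpha> \<sigma> by auto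
  have "(2 + 18 * pi\<^sup>2 / \<sigma>\<^sup>2) * h \<le> M0A \<sigma> * h"
    using M0A_lower_bounds(1)[OF \<sigma>] h by (intro mult_right_mono) auto
  moreover have "(2 + 18 * pi\<^sup>2 / \<sigma>\<^sup>2) * h = 2*h + 18 * (\<alpha>\<^sup>2 * pi\<^sup>2)"
    using h \<sigma> by (simp add: field_simps)
  moreover have "19*pi\<^sup>2*\<alpha>\<^sup>2 = 19 * (\<alpha>\<^sup>2 * pi\<^sup>2)" by simp
  ultimately show "19*pi\<^sup>2*\<alpha>\<^sup>2 + 2*h < L\<^sup>2" using x(2) by linarith
  have "\<sigma>\<^sup>2 / 2 * h \<le> M0A \<sigma> * h" using M0A_lower_bounds(2)[OF \<sigma>] h by (intro mult_right_mono) auto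
  moreover have "0 \<le> \<alpha>\<^sup>2 * pi\<^sup>2" by simp
  ultimately have "\<sigma>\<^sup>2 / 2 * h < L\<^sup>2" using x(2) by linarith
  have "h\<^sup>2 = 2 * \<alpha>\<^sup>2 * (\<sigma>\<^sup>2 / 2 * h)" by (simp add: h(1) power2_eq_square)
  also have "\<dots> < 2 * \<alpha>\<^sup>2 * L\<^sup>2" using \<open>\<sigma>\<^sup>2 / 2 * h < L\<^sup>2\<close> \<alpha> by simp
  also have "\<dots> \<le> (2 * \<alpha> * \<bar>L\<bar>)\<^sup>2" by (simp add: power_mult_distrib)
  finally have "h\<^sup>2 < (2 * \<alpha> * \<bar>L\<bar>)\<^sup>2" .
  then show "h \<le> 2 * \<alpha> * \<bar>L\<bar>" using h(2) \<alpha> by (simp add: power_less_imp_less_base less_imp_le)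
qed

lemma integral_fA_conj_diff_eq:
  assumes "0 < x" "\<alpha> \<noteq> 0"
  shows "integral S (\<lambda>t. (fA \<alpha> T (Complex h t) x - fA \<alpha> T (Complex h (- t)) x) * of_real (exp (- c * t)))
    = of_real (sin (\<alpha> * pi) / (\<alpha> * pi)) * integral S (\<lambda>t.
        (gA \<alpha> T (T + \<alpha> * ln x) (csqrt (Complex h t)) - gA \<alpha> T (T + \<alpha> * ln x) (csqrt (Complex h (- t))))
        * of_real (exp (- c * t)))"
proof -
  define K where "K = complex_of_real (sin (\<alpha> * pi) / (\<alpha> * pi))"
  have "fA \<alpha> T u x = K * gA \<alpha> T (T + \<alpha> * ln x) (csqrt u)" for u
    unfolding K_def by (rule fA_eq_gA[OF assms])
  then have "(\<lambda>t. (fA \<alpha> T (Complex h t) x - fA \<alpha> T (Complex h (- t)) x) * of_real (exp (- c * t)))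
    = (\<lambda>t. K * ((gA \<alpha> T (T + \<alpha> * ln x) (csqrt (Complex h t))
                  - gA \<alpha> T (T + \<alpha> * ln x) (csqrt (Complex h (- t)))) * of_real (exp (- c * t))))"
    by (simp add: left_diff_distrib right_diff_distrib mult.assoc)
  then show ?thesis unfolding K_def by (simp only: integral_mult_right)
qed

lemma norm_integral_fA_conj_diff_le:
  fixes \<alpha> \<sigma> c x :: real and N1 :: nat
  defines "h \<equiv> hA \<alpha> \<sigma>" and "T \<equiv> TA \<alpha> \<sigma> N1"
  assumes \<alpha>: "0 < \<alpha>" "\<alpha> < 1" and \<sigma>: "0 < \<sigma>" and c: "0 < c" and x: "x \<in> UpsA \<alpha> \<sigma> N1"
  shows "cmod (integral {0..2 * (2 * \<alpha> * pi * (T + \<alpha> * ln x))}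
            (\<lambda>t. (fA \<alpha> T (Complex h t) x - fA \<alpha> T (Complex h (- t)) x)
                  * complex_of_real (exp (- c * t))))
         \<le> 18 * exp 4 * ((exp h / h\<^sup>2) * integral {0..1} (\<lambda>t. t * exp (- c * t))
              + (exp (sqrt h) / sqrt h) * integral {1..} (\<lambda>t. exp (sqrt t) / sqrt t * exp (- c * t)))
            * exp (- T)" (is "cmod ?lhs \<le> ?R")
proof -
  define L where "L = T + \<alpha> * ln x"
  define I where "I = integral {0..4*\<alpha>*pi*L}
      (\<lambda>t. (gA \<alpha> T L (csqrt (Complex h t)) - gA \<alpha> T L (csqrt (Complex h (- t))))
            * of_real (exp (- c * t)))"
  have h: "0 < h" unfolding h_def hA_def using \<alpha> \<sigma> by simp
  have x0: "0 < x" and L: "19*pi\<^sup>2*\<alpha>\<^sup>2 + 2*h < L\<^sup>2" and hL: "h \<le> 2 * \<alpha> * \<bar>L\<bar>"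
    using UpsA_bounds[OF \<alpha>(1) \<sigma> x, folded T_def h_def, folded L_def] by auto
  have I: "norm I \<le> ?R"
  proof (cases "0 < L")
    case True
    then show ?thesis unfolding I_def using hL \<alpha>
      by (intro norm_integral_gA_conj_diff_le[OF \<alpha>(1) _ h _ True L c]) simp_all
  next
    case False
    then have "4*\<alpha>*pi*L \<le> 0" using \<alpha> by (simp add: mult_nonneg_nonpos)
    then have "Henstock_Kurzweil_Integration.content {0..4*\<alpha>*pi*L} = 0"
      by (simp only: content_real_eq_0)
    then have "I = 0" unfolding I_def by (rule integral_null[of 0 "4*\<alpha>*pi*L", unfolded cbox_interval])
    moreover have "0 \<le> ?R" using h c
      by (intro mult_nonneg_nonneg add_nonneg_nonneg integral_nonneg
          integrable_on_exp_sqrt_div_sqrt_exp_minus integrable_continuous_interval continuous_intros) auto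
    ultimately show ?thesis by simp
  qed
  define K where "K = sin (\<alpha> * pi) / (\<alpha> * pi)"
  have K: "0 \<le> K" "K \<le> 1" unfolding K_def using sin_div_self_bounds[of "\<alpha> * pi"] \<alpha> by auto
  have "2 * (2 * \<alpha> * pi * (T + \<alpha> * ln x)) = 4 * \<alpha> * pi * L" unfolding L_def by simp
  then have "?lhs = of_real K * I"
    unfolding I_def L_def K_def using \<alpha> by (simp only:) (rule integral_fA_conj_diff_eq[OF x0], simp)
  then have "cmod ?lhs = K * norm I" using K by (simp add: norm_mult)
  also have "\<dots> \<le> norm I" using K by (simp add: mult_left_le_one_le)
  finally show ?thesis using I by linarith
qed

theorem lemmaA1:
  shows "\<exists>C::real. \<forall>(\<alpha>::real) (\<sigma>::real) (N1::nat) (n::nat) (x::real).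
     0 < \<alpha> \<longrightarrow> \<alpha> < 1 \<longrightarrow> 0 < \<sigma> \<longrightarrow> 1 \<le> N1 \<longrightarrow> 1 \<le> n \<longrightarrow>
     x \<in> UpsA \<alpha> \<sigma> N1 \<longrightarrow>
     (let h = hA \<alpha> \<sigma>; T = TA \<alpha> \<sigma> N1; a = 2 * \<alpha> * pi * (T + \<alpha> * ln x) in
       cmod (integral {0..2*a}
               (\<lambda>t. (fA \<alpha> T (Complex h t) x - fA \<alpha> T (Complex h (-t)) x)
                     * complex_of_real (exp (- (2 * real n * pi / h) * t))))
       \<le> C * ((exp h / h\<^sup>2) * integral {0..1} (\<lambda>t. t * exp (- (2 * real n * pi / h) * t))
              + (exp (sqrt h) / sqrt h) *
                integral {1..} (\<lambda>t. exp (sqrt t) / sqrt t * exp (- (2 * real n * pi / h) * t)))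
           * exp (- T))"
  by (intro exI[of _ "18 * exp 4"] allI impI, unfold Let_def, rule norm_integral_fA_conj_diff_le)
    (auto simp: hA_def)

end
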